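(* Let $T,M,\delta,\tau$ be as in the setup, let $\xi>0$, $\varepsilon\in(0,1)$, $\eta\in(0,1)$ and an integer $J\ge1$. Consider the following randomized procedure (HybridPeel). Set $W_1=V_T$. For $i=1,\dots,J$, as long as $W_i\neq\emptyset$: random estimates $\hat C_i(w)\ge0$ for all $w\in W_i$ are produced; set $\hat\tau(W_i)=\frac1k\sum_{w\in W_i}\hat C_i(w)$, $L_i=\{w\in W_i:\hat C_i(w)\le k(1+\xi)\hat\tau(W_i)/|W_i|\}$ and $W_{i+1}=W_i\setminus L_i$. Then run the Greedy peeling procedure on $T[W_{J+1}]$ (if $W_{J+1}$ is nonempty): starting from $U_0=W_{J+1}$, repeatedly remove a vertex of minimum temporal motif degree $C_{U}(\cdot)$ in the current set $U$ (ties broken arbitrarily) until $k$ vertices remain, and let $W'$ be a set of maximum density $\rho$ among all sets visited in this phase. Output the set among the candidates $W_1,\dots,W_J$ (each scored by $\hat\tau(W_j)/|W_j|$) and $W'$ (scored by $\rho(W')$) with the largest score. Assume that for every $i\le J$, conditionally on everything before iteration $i$, the event $\{\,|\hat C_i(w)-C_{W_i}(w)|\le\varepsilon\,C_{W_i}(w)\text{ for all }w\in W_i\,\}$ has probability at least $1-\eta/J$. Then with probability at least $1-\eta$ the output $W$ satisfies $\rho(W)\ge\frac{(1-\varepsilon)^2}{k(1+\xi)(1+\varepsilon)^2}\mathrm{OPT}$ when $J\ge2$, and $\rho(W)\ge\frac{(1-\varepsilon)^2}{k(1+\xi)(1+\varepsilon)}\mathrm{OPT}$ when $J=1$.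
   Context: Setup. A temporal network is a pair $T=(V_T,E_T)$ where $V_T$ is a finite set of $n$ vertices and $E_T$ is a finite set of temporal edges $(u,v,t)$ with $u,v\in V_T$ and timestamp $t\in\mathbb{R}_{>0}$; timestamps are assumed distinct. A $k$-vertex $\ell$-edge temporal motif ($k,\ell\ge 2$) is a pair $M=(K,\sigma)$ where $K=(V_K,E_K)$ is a directed, weakly connected multigraph with $|V_K|=k$, $|E_K|=\ell$, and $\sigma$ is an ordering of $E_K$; equivalently $M$ is the sequence $\langle(x_1,y_1),\dots,(x_\ell,y_\ell)\rangle$ of its edges in the order $\sigma$. Given $\delta>0$, a $\delta$-instance of $M$ in a temporal network is a sequence $S=\langle(x'_1,y'_1,t'_1),\dots,(x'_\ell,y'_\ell,t'_\ell)\rangle$ of $\ell$ distinct temporal edges of that network with $t'_1<\dots<t'_\ell$ such that (1) there is a bijection $h$ from the set of vertices appearing in $S$ onto $V_K$ with $h(x'_i)=x_i$ and $h(y'_i)=y_i$ for all $i\in[\ell]$, and (2) $t'_\ell-t'_1\le\delta$. We write $v\in S$ if $v$ is an endpoint of some edge of $S$; every $\delta$-instance contains exactly $k$ vertices. For $W\subseteq V_T$, $T[W]=(W,\{(u,v,t)\in E_T:u,v\in W\})$ is the induced temporal subnetwork and $\mathcal{S}_W$ is the set of $\delta$-instances of $M$ in $T[W]$. A weighting function $\tau$ assigns a weight $\tau(S)>0$ to each $\delta$-instance $S$ of $M$ in $T$; for $W\subseteq V_T$, $\tau(W)=\sum_{S\in\mathcal{S}_W}\tau(S)$. The temporal motif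 degree of $v$ in $T[W]$ is $C_W(v)=\sum_{S\in\mathcal{S}_W:\,v\in S}\tau(S)$. The density of a nonempty $W\subseteq V_T$ is $\rho(W)=\tau(W)/|W|$, and $\mathrm{OPT}=\max_{\emptyset\ne W\subseteq V_T}\rho(W)$ is the optimal value of the Temporal Motif Densest Subnetwork (TMDS) problem. *)

theory Defs
  imports "HOL-Probability.Probability_Mass_Function"
begin

type_synonym 'v tedge = "'v \<times> 'v \<times> real"

definition ts :: "'v tedge \<Rightarrow> real" where
  "ts e = snd (snd e)"

definition temporal_network :: "'v set \<Rightarrow> 'v tedge set \<Rightarrow> bool" where
  "temporal_network V E \<longleftrightarrow> finite V \<and> finite E \<and>
     (\<forall>(u, v, t) \<in> E. u \<in> V \<and> v \<in> V \<and> t > 0) \<and> inj_on ts E"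

text \<open>Motif given as the sequence of its edges in the order sigma; V_K = endpoints.\<close>
definition motif_vertices :: "('m \<times> 'm) list \<Rightarrow> 'm set" where
  "motif_vertices M = fst ` set M \<union> snd ` set M"

definition temporal_motif :: "('m \<times> 'm) list \<Rightarrow> bool" where
  "temporal_motif M \<longleftrightarrow> length M \<ge> 2 \<and> card (motif_vertices M) \<ge> 2 \<and>
     (\<forall>x \<in> motif_vertices M. \<forall>y \<in> motif_vertices M.
        (x, y) \<in> (set M \<union> (set M)\<inverse>)\<^sup>*)"

abbreviation mk :: "('m \<times> 'm) list \<Rightarrow> nat" where
  "mk M \<equiv> card (motif_vertices M)"

definition inst_vertices :: "'v tedge list \<Rightarrow> 'v set" where
  "inst_vertices S = fst ` set S \<union> (fst \<circ> snd) ` set S"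

definition induced :: "'v tedge set \<Rightarrow> 'v set \<Rightarrow> 'v tedge set" where
  "induced E W = {(u, v, t) \<in> E. u \<in> W \<and> v \<in> W}"

definition is_instance :: "('m \<times> 'm) list \<Rightarrow> real \<Rightarrow> 'v tedge set \<Rightarrow> 'v tedge list \<Rightarrow> bool" where
  "is_instance M \<delta> E S \<longleftrightarrow>
     length S = length M \<and> distinct S \<and> set S \<subseteq> E \<and>
     sorted_wrt (\<lambda>a b. ts a < ts b) S \<and>
     (\<exists>h. bij_betw h (inst_vertices S) (motif_vertices M) \<and>
        (\<forall>i < length M. h (fst (S ! i)) = fst (M ! i) \<and> h (fst (snd (S ! i))) = snd (M ! i))) \<and>
     ts (last S) - ts (hd S) \<le> \<delta>"

definition instances :: "('m \<times> 'm) list \<Rightarrow> real \<Rightarrow> 'v tedge set \<Rightarrow> 'v set \<Rightarrow> 'v tedge list set" where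
  "instances M \<delta> E W = {S. is_instance M \<delta> (induced E W) S}"

definition tauW :: "('m \<times> 'm) list \<Rightarrow> real \<Rightarrow> 'v tedge set \<Rightarrow> ('v tedge list \<Rightarrow> real) \<Rightarrow> 'v set \<Rightarrow> real" where
  "tauW M \<delta> E \<tau> W = (\<Sum>S \<in> instances M \<delta> E W. \<tau> S)"

definition mdeg :: "('m \<times> 'm) list \<Rightarrow> real \<Rightarrow> 'v tedge set \<Rightarrow> ('v tedge list \<Rightarrow> real) \<Rightarrow> 'v set \<Rightarrow> 'v \<Rightarrow> real" where
  "mdeg M \<delta> E \<tau> W v = (\<Sum>S \<in> {S \<in> instances M \<delta> E W. v \<in> inst_vertices S}. \<tau> S)"

definition rho :: "('m \<times> 'm) list \<Rightarrow> real \<Rightarrow> 'v tedge set \<Rightarrow> ('v tedge list \<Rightarrow> real) \<Rightarrow> 'v set \<Rightarrow> real" where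
  "rho M \<delta> E \<tau> W = tauW M \<delta> E \<tau> W / real (card W)"

definition OPT :: "('m \<times> 'm) list \<Rightarrow> real \<Rightarrow> 'v tedge set \<Rightarrow> ('v tedge list \<Rightarrow> real) \<Rightarrow> 'v set \<Rightarrow> real" where
  "OPT M \<delta> E \<tau> V = Max (rho M \<delta> E \<tau> ` {W. W \<subseteq> V \<and> W \<noteq> {}})"

definition tauhat :: "nat \<Rightarrow> 'v set \<Rightarrow> ('v \<Rightarrow> real) \<Rightarrow> real" where
  "tauhat k W c = (\<Sum>w \<in> W. c w) / real k"

definition Lset :: "nat \<Rightarrow> real \<Rightarrow> 'v set \<Rightarrow> ('v \<Rightarrow> real) \<Rightarrow> 'v set" where
  "Lset k \<xi> W c = {w \<in> W. c w \<le> real k * (1 + \<xi>) * tauhat k W c / real (card W)}"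

text \<open>Wseq k xi V h i is the paper's W_{i+1}, where h ! j are the estimates of
  iteration j+1 (so Wseq .. 0 = W_1 = V).\<close>
fun Wseq :: "nat \<Rightarrow> real \<Rightarrow> 'v set \<Rightarrow> ('v \<Rightarrow> real) list \<Rightarrow> nat \<Rightarrow> 'v set" where
  "Wseq k \<xi> V h 0 = V"
| "Wseq k \<xi> V h (Suc i) = Wseq k \<xi> V h i - Lset k \<xi> (Wseq k \<xi> V h i) (h ! i)"

text \<open>Adaptive sampling: at step i, given the history h of all previous estimates,
  the estimates are drawn from D i h.\<close>
fun samp :: "(nat \<Rightarrow> 'a list \<Rightarrow> 'a pmf) \<Rightarrow> nat \<Rightarrow> 'a list \<Rightarrow> 'a list pmf" where
  "samp D 0 h = return_pmf h"
| "samp D (Suc n) h = bind_pmf (D (length h) h) (\<lambda>c. samp D n (h @ [c]))"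

inductive greedy_run :: "('v set \<Rightarrow> 'v \<Rightarrow> real) \<Rightarrow> nat \<Rightarrow> 'v set list \<Rightarrow> bool"
  for Cd k where
  stop: "card U \<le> k \<Longrightarrow> greedy_run Cd k [U]"
| step: "k < card U \<Longrightarrow> v \<in> U \<Longrightarrow> (\<forall>u \<in> U. Cd U v \<le> Cd U u) \<Longrightarrow>
         greedy_run Cd k ((U - {v}) # us) \<Longrightarrow> greedy_run Cd k (U # (U - {v}) # us)"

text \<open>W is a possible output of HybridPeel given the estimate history h
  (over all tie-breaking choices).\<close>
definition hybrid_output ::
  "('m \<times> 'm) list \<Rightarrow> real \<Rightarrow> 'v tedge set \<Rightarrow> ('v tedge list \<Rightarrow> real) \<Rightarrow> real \<Rightarrow> nat \<Rightarrow>
   'v set \<Rightarrow> ('v \<Rightarrow> real) list \<Rightarrow> 'v set \<Rightarrow> bool" where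
  "hybrid_output M \<delta> E \<tau> \<xi> J V h W \<longleftrightarrow>
    (let k = mk M;
         Ws = Wseq k \<xi> V h;
         peel = {(Ws j, tauhat k (Ws j) (h ! j) / real (card (Ws j))) | j. j < J \<and> Ws j \<noteq> {}}
     in \<exists>G. (if Ws J = {} then G = {}
             else (\<exists>us W'. greedy_run (mdeg M \<delta> E \<tau>) k us \<and> hd us = Ws J \<and>
                     W' \<in> set us \<and> (\<forall>U \<in> set us. rho M \<delta> E \<tau> U \<le> rho M \<delta> E \<tau> W') \<and>
                     G = {(W', rho M \<delta> E \<tau> W')})) \<and>
           (\<exists>s. (W, s) \<in> peel \<union> G \<and> (\<forall>(W2, s2) \<in> peel \<union> G. s2 \<le> s)))"

end

theory Submission
  imports Defs
begin

text \<open>Let \<open>W\<^sub>o\<close> be a densest subset. Removing a vertex from \<open>W\<^sub>o\<close> cannot increase its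
  density, so every vertex of \<open>W\<^sub>o\<close> has motif degree at least \<open>OPT\<close>. Suppose all estimates
  are \<open>\<epsilon>\<close>-accurate. If some vertex \<open>w\<close> of \<open>W\<^sub>o\<close> is peeled at iteration \<open>i\<close>, then
  \<open>(1 - \<epsilon>) OPT\<close> is at most the estimate of \<open>w\<close>, which is at most \<open>k(1 + \<xi>)\<close> times the
  score of \<open>W\<^sub>i\<close>; otherwise \<open>W\<^sub>o \<subseteq> W\<^sub>J\<^sub>+\<^sub>1\<close>, and Greedy started above \<open>W\<^sub>o\<close> meets
  a set of density at least \<open>OPT / k\<close>. Either way the best score is at least
  \<open>(1 - \<epsilon>) OPT / (k(1 + \<xi>))\<close>, and since accurate estimates overestimate densities by at
  most a factor \<open>1 + \<epsilon>\<close>, the output has density at least \<open>(1 - \<epsilon>) OPT / (k(1 + \<xi>)(1 + \<epsilon>))\<close>,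
  which dominates both claimed bounds. A union bound over the \<open>J\<close> adaptively sampled
  iterations gives the probability \<open>1 - \<eta>\<close>.\<close>

lemma instances_iff:
  "S \<in> instances M \<delta> E W \<longleftrightarrow> is_instance M \<delta> E S \<and> inst_vertices S \<subseteq> W"
proof
  assume S: "S \<in> instances M \<delta> E W"
  then show "is_instance M \<delta> E S \<and> inst_vertices S \<subseteq> W"
    by (force simp: instances_def is_instance_def induced_def inst_vertices_def)
next
  assume S: "is_instance M \<delta> E S \<and> inst_vertices S \<subseteq> W"
  have "set S \<subseteq> induced E W"
  proof
    fix e assume e: "e \<in> set S"
    obtain u v t where e_eq: "e = (u, v, t)" by (cases e)
    have "u \<in> inst_vertices S" "v \<in> inst_vertices S"
      using e e_eq by (force simp: inst_vertices_def)+
    then show "e \<in> induced E W"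
      using S e e_eq by (auto simp: induced_def is_instance_def)
  qed
  with S show "S \<in> instances M \<delta> E W"
    by (auto simp: instances_def is_instance_def)
qed

lemma finite_instances: "finite E \<Longrightarrow> finite (instances M \<delta> E W)"
proof -
  assume "finite E"
  moreover have "instances M \<delta> E W \<subseteq> {xs. set xs \<subseteq> E \<and> length xs = length M}"
    by (auto simp: instances_def is_instance_def induced_def)
  ultimately show ?thesis
    using finite_lists_length_eq finite_subset by blast
qed

lemma card_inst_vertices: "is_instance M \<delta> E S \<Longrightarrow> card (inst_vertices S) = mk M"
  by (auto simp: is_instance_def intro: bij_betw_same_card)

lemma instances_mono: "W \<subseteq> W' \<Longrightarrow> instances M \<delta> E W \<subseteq> instances M \<delta> E W'"
  by (fastforce simp: instances_iff)

lemma instances_Diff_singleton: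
  "instances M \<delta> E (W - {v}) = {S \<in> instances M \<delta> E W. v \<notin> inst_vertices S}"
  by (auto simp: instances_iff)

lemma instances_empty: "0 < mk M \<Longrightarrow> instances M \<delta> E {} = {}"
  by (auto simp: instances_iff dest!: card_inst_vertices)

lemma exists_first_failure: "P 0 \<Longrightarrow> \<not> P n \<Longrightarrow> \<exists>i<n. P i \<and> \<not> P (Suc i)"
  by (induction n) (auto intro: less_SucI)

definition accurate :: "real \<Rightarrow> ('v \<Rightarrow> real) \<Rightarrow> 'v set \<Rightarrow> ('v \<Rightarrow> real) \<Rightarrow> bool" where
  "accurate \<epsilon> C W c \<longleftrightarrow> (\<forall>w\<in>W. \<bar>c w - C w\<bar> \<le> \<epsilon> * C w)"

lemma Wseq_subset: "Wseq k \<xi> V h i \<subseteq> V"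
  by (induction i) auto

lemma Wseq_take: "i \<le> n \<Longrightarrow> Wseq k \<xi> V (take n h) i = Wseq k \<xi> V h i"
  by (induction i) auto

lemma hybrid_outputE:
  assumes "hybrid_output M \<delta> E \<tau> \<xi> J V h W"
  defines "Ws \<equiv> Wseq (mk M) \<xi> V h"
  obtains s where
    "\<And>j. j < J \<Longrightarrow> Ws j \<noteq> {} \<Longrightarrow> tauhat (mk M) (Ws j) (h ! j) / card (Ws j) \<le> s"
    "Ws J \<noteq> {} \<Longrightarrow> \<exists>us. greedy_run (mdeg M \<delta> E \<tau>) (mk M) us \<and> hd us = Ws J \<and>
        (\<forall>U\<in>set us. rho M \<delta> E \<tau> U \<le> s)"
    "(\<exists>j<J. Ws j \<noteq> {} \<and> W = Ws j \<and> s = tauhat (mk M) (Ws j) (h ! j) / card (Ws j)) \<or>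
     (Ws J \<noteq> {} \<and> s = rho M \<delta> E \<tau> W)"
proof -
  define peel where "peel = {(Ws j, tauhat (mk M) (Ws j) (h ! j) / real (card (Ws j))) | j. j < J \<and> Ws j \<noteq> {}}"
  have "\<exists>G. (if Ws J = {} then G = {}
        else \<exists>us W'. greedy_run (mdeg M \<delta> E \<tau>) (mk M) us \<and> hd us = Ws J \<and> W' \<in> set us \<and>
          (\<forall>U \<in> set us. rho M \<delta> E \<tau> U \<le> rho M \<delta> E \<tau> W') \<and> G = {(W', rho M \<delta> E \<tau> W')}) \<and>
      (\<exists>s. (W, s) \<in> peel \<union> G \<and> (\<forall>(W2, s2) \<in> peel \<union> G. s2 \<le> s))"
    using assms(1) unfolding hybrid_output_def Let_def peel_def Ws_def .
  then obtain G s where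
    G: "if Ws J = {} then G = {}
        else \<exists>us W'. greedy_run (mdeg M \<delta> E \<tau>) (mk M) us \<and> hd us = Ws J \<and> W' \<in> set us \<and>
          (\<forall>U \<in> set us. rho M \<delta> E \<tau> U \<le> rho M \<delta> E \<tau> W') \<and> G = {(W', rho M \<delta> E \<tau> W')}"
    and chosen: "(W, s) \<in> peel \<union> G" and max: "\<forall>(W2, s2) \<in> peel \<union> G. s2 \<le> s"
    by (elim exE conjE)
  show thesis
  proof (rule that)
    show "tauhat (mk M) (Ws j) (h ! j) / card (Ws j) \<le> s" if "j < J" "Ws j \<noteq> {}" for j
      using that max by (auto simp: peel_def)
    show "\<exists>us. greedy_run (mdeg M \<delta> E \<tau>) (mk M) us \<and> hd us = Ws J \<and> (\<forall>U\<in>set us. rho M \<delta> E \<tau> U \<le> s)"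
      if ne: "Ws J \<noteq> {}"
    proof -
      obtain us W' where "greedy_run (mdeg M \<delta> E \<tau>) (mk M) us" "hd us = Ws J"
        "\<forall>U \<in> set us. rho M \<delta> E \<tau> U \<le> rho M \<delta> E \<tau> W'" "G = {(W', rho M \<delta> E \<tau> W')}"
        using G ne by auto
      moreover have "rho M \<delta> E \<tau> W' \<le> s"
        using max \<open>G = _\<close> by auto
      ultimately show ?thesis
        by (blast intro: order_trans)
    qed
    show "(\<exists>j<J. Ws j \<noteq> {} \<and> W = Ws j \<and> s = tauhat (mk M) (Ws j) (h ! j) / card (Ws j)) \<or>
      (Ws J \<noteq> {} \<and> s = rho M \<delta> E \<tau> W)"
      using chosen G by (auto simp: peel_def split: if_splits)
  qed
qed

locale motif_weighting =
  fixes M :: "('m \<times> 'm) list" and \<delta> :: real and E :: "'v tedge set"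
    and \<tau> :: "'v tedge list \<Rightarrow> real"
  assumes finite_E: "finite E"
    and weight_pos: "\<And>S. is_instance M \<delta> E S \<Longrightarrow> 0 < \<tau> S"
    and motif_nonempty: "0 < mk M"
begin

abbreviation weight :: "'v set \<Rightarrow> real" where "weight \<equiv> tauW M \<delta> E \<tau>"
abbreviation deg :: "'v set \<Rightarrow> 'v \<Rightarrow> real" where "deg \<equiv> mdeg M \<delta> E \<tau>"
abbreviation dens :: "'v set \<Rightarrow> real" where "dens \<equiv> rho M \<delta> E \<tau>"

lemma weight_nonneg: "0 \<le> weight W"
  unfolding tauW_def by (intro sum_nonneg less_imp_le weight_pos) (simp add: instances_iff)

lemma dens_nonneg: "0 \<le> dens W"
  by (simp add: rho_def weight_nonneg)

lemma weight_mono: "W \<subseteq> W' \<Longrightarrow> weight W \<le> weight W'"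
  unfolding tauW_def
proof (rule sum_mono2)
  show "finite (instances M \<delta> E W')" by (rule finite_instances[OF finite_E])
qed (use instances_mono[of W W' M \<delta> E] in \<open>auto simp: instances_iff intro: less_imp_le weight_pos\<close>)

lemma deg_mono: "W \<subseteq> W' \<Longrightarrow> deg W v \<le> deg W' v"
  unfolding mdeg_def
proof (rule sum_mono2)
  show "finite {S \<in> instances M \<delta> E W'. v \<in> inst_vertices S}"
    by (rule finite_subset[OF _ finite_instances[OF finite_E]]) auto
qed (use instances_mono[of W W' M \<delta> E] in \<open>auto simp: instances_iff intro: less_imp_le weight_pos\<close>)

lemma weight_empty: "weight {} = 0"
  by (simp add: tauW_def instances_empty motif_nonempty)

text \<open>Each instance has exactly \<open>mk M\<close> vertices, so it is counted \<open>mk M\<close> times.\<close>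
lemma sum_deg_eq: "finite W \<Longrightarrow> (\<Sum>w\<in>W. deg W w) = mk M * weight W"
proof -
  assume fin: "finite W"
  let ?I = "instances M \<delta> E W"
  have "(\<Sum>w\<in>W. deg W w) = (\<Sum>w\<in>W. \<Sum>S\<in>{S. S \<in> ?I \<and> w \<in> inst_vertices S}. \<tau> S)"
    by (simp add: mdeg_def)
  also have "\<dots> = (\<Sum>S\<in>?I. \<Sum>w\<in>{w. w \<in> W \<and> w \<in> inst_vertices S}. \<tau> S)"
    by (rule sum.swap_restrict[OF fin finite_instances[OF finite_E]])
  also have "\<dots> = (\<Sum>S\<in>?I. mk M * \<tau> S)"
  proof (rule sum.cong[OF refl])
    fix S assume "S \<in> ?I"
    then have "{w. w \<in> W \<and> w \<in> inst_vertices S} = inst_vertices S"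
      and "card (inst_vertices S) = mk M"
      by (auto simp: instances_iff card_inst_vertices)
    then show "(\<Sum>w\<in>{w. w \<in> W \<and> w \<in> inst_vertices S}. \<tau> S) = mk M * \<tau> S"
      by simp
  qed
  finally show ?thesis
    by (simp add: tauW_def sum_distrib_left)
qed

lemma weight_Diff_singleton: "weight W = weight (W - {v}) + deg W v"
proof -
  let ?I = "instances M \<delta> E W"
  have "weight W = (\<Sum>S\<in>{S \<in> ?I. v \<notin> inst_vertices S} \<union> {S \<in> ?I. v \<in> inst_vertices S}. \<tau> S)"
    unfolding tauW_def by (rule sum.cong) auto
  also have "\<dots> = (\<Sum>S\<in>{S \<in> ?I. v \<notin> inst_vertices S}. \<tau> S) + (\<Sum>S\<in>{S \<in> ?I. v \<in> inst_vertices S}. \<tau> S)"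
    by (intro sum.union_disjoint) (auto intro: finite_subset[OF _ finite_instances[OF finite_E]])
  finally show ?thesis
    by (simp add: tauW_def mdeg_def instances_Diff_singleton)
qed

definition densest_subset :: "'v set \<Rightarrow> 'v set \<Rightarrow> bool" where
  "densest_subset V W \<longleftrightarrow> W \<subseteq> V \<and> W \<noteq> {} \<and> (\<forall>U. U \<subseteq> V \<longrightarrow> U \<noteq> {} \<longrightarrow> dens U \<le> dens W)"

lemma densest_subset_exists:
  assumes "finite V" "V \<noteq> {}"
  obtains W where "densest_subset V W" "dens W = OPT M \<delta> E \<tau> V"
proof -
  let ?F = "{W. W \<subseteq> V \<and> W \<noteq> {}}"
  have "finite ?F"
    using assms(1) by (rule finite_subset[rotated, OF finite_Pow_iff[THEN iffD2]]) auto
  then have fin: "finite (dens ` ?F)"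
    by (rule finite_imageI)
  have "V \<in> ?F"
    using assms(2) by simp
  then have "OPT M \<delta> E \<tau> V \<in> dens ` ?F"
    unfolding OPT_def by (intro Max_in fin) blast
  then obtain W where W: "W \<in> ?F" "OPT M \<delta> E \<tau> V = dens W"
    by (rule imageE)
  have "dens U \<le> dens W" if "U \<in> ?F" for U
    unfolding W(2)[symmetric] OPT_def using Max_ge[OF fin imageI[OF that]] .
  then have "densest_subset V W"
    using W(1) unfolding densest_subset_def by blast
  then show thesis
    using W(2) by (intro that) simp_all
qed

lemma OPT_nonneg: "finite V \<Longrightarrow> V \<noteq> {} \<Longrightarrow> 0 \<le> OPT M \<delta> E \<tau> V"
  by (metis densest_subset_exists dens_nonneg)

text \<open>Removing \<open>v\<close> must not increase the density, so \<open>v\<close> carries at least the average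
  share of the weight.\<close>
lemma densest_subset_min_deg:
  assumes "finite V" "densest_subset V W" "v \<in> W"
  shows "dens W \<le> deg W v"
proof -
  have "W \<subseteq> V" "W \<noteq> {}"
    using assms(2) by (auto simp: densest_subset_def)
  then have fin: "finite W" and n: "1 \<le> card W"
    using assms(1) finite_subset by (auto simp: Suc_le_eq card_gt_0_iff)
  have card_Diff: "real (card (W - {v})) = real (card W) - 1"
    using assms(3) n fin by simp
  have "weight (W - {v}) \<le> dens W * (real (card W) - 1)"
  proof (cases "W - {v} = {}")
    case True
    then show ?thesis
      using card_Diff weight_empty unfolding True by simp
  next
    case False
    have "W - {v} \<subseteq> V"
      using \<open>W \<subseteq> V\<close> by blast
    then have "dens (W - {v}) \<le> dens W"
      using assms(2) False by (simp add: densest_subset_def)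
    moreover have "0 < card (W - {v})"
      using False fin by (simp add: card_gt_0_iff)
    ultimately show ?thesis
      using card_Diff by (simp add: rho_def divide_le_eq mult.commute)
  qed
  moreover have "weight W = dens W * real (card W)"
    using n by (simp add: rho_def)
  ultimately show ?thesis
    using weight_Diff_singleton[of W v] by (simp add: algebra_simps)
qed

text \<open>When Greedy first removes a vertex \<open>v\<close> of \<open>W\<close>, the current set \<open>U\<close> contains \<open>W\<close> and
  \<open>v\<close> has minimum degree in \<open>U\<close>, so all degrees in \<open>U\<close> are at least \<open>deg W v \<ge> dens W\<close>.\<close>
lemma greedy_run_dens_ge:
  assumes "greedy_run deg (mk M) us" "finite (hd us)" "W \<subseteq> hd us" "W \<noteq> {}"
    and min_deg: "\<And>v. v \<in> W \<Longrightarrow> dens W \<le> deg W v"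
  shows "\<exists>U\<in>set us. dens W / mk M \<le> dens U"
  using assms(1-3)
proof (induction us rule: greedy_run.induct)
  case (stop U)
  have "0 < card U" "1 \<le> card W"
    using stop assms(4) finite_subset by (auto simp: Suc_le_eq card_gt_0_iff)
  then have "dens W \<le> weight W / 1"
    unfolding rho_def using weight_nonneg by (intro divide_left_mono) auto
  also have "\<dots> \<le> weight U"
    using weight_mono[OF stop(3)] by simp
  finally have "dens W / mk M \<le> weight U / mk M"
    by (simp add: divide_right_mono)
  also have "\<dots> \<le> dens U"
    unfolding rho_def using stop(1) \<open>0 < card U\<close> weight_nonneg
    by (intro divide_left_mono) auto
  finally show ?case by simp
next
  case (step U v us)
  show ?case
  proof (cases "v \<in> W")
    case False
    then show ?thesis
      using step by auto
  next
    case True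
    have "dens W \<le> deg U u" if "u \<in> U" for u
    proof -
      have "dens W \<le> deg W v" by (rule min_deg[OF True])
      also have "\<dots> \<le> deg U v" using step.prems(2) by (simp add: deg_mono)
      also have "\<dots> \<le> deg U u" using step(3) that by blast
      finally show ?thesis .
    qed
    then have "card U * dens W \<le> mk M * weight U"
      using sum_mono[of U "\<lambda>_. dens W" "deg U"] sum_deg_eq[of U] step.prems(1) by simp
    moreover have "0 < card U"
      using step(1) by simp
    ultimately have "dens W / mk M \<le> weight U / card U"
      using motif_nonempty by (simp add: le_divide_eq divide_le_eq mult.commute)
    then show ?thesis by (simp add: rho_def)
  qed
qed

lemma tauhat_le_weight:
  assumes "finite W" "accurate \<epsilon> (deg W) W c"
  shows "tauhat (mk M) W c \<le> (1 + \<epsilon>) * weight W"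
proof -
  have "(\<Sum>w\<in>W. c w) \<le> (\<Sum>w\<in>W. (1 + \<epsilon>) * deg W w)"
    using assms(2) by (intro sum_mono) (force simp: accurate_def algebra_simps abs_le_iff)
  also have "\<dots> = mk M * ((1 + \<epsilon>) * weight W)"
    by (simp add: sum_distrib_left[symmetric] sum_deg_eq[OF assms(1)])
  finally show ?thesis
    using motif_nonempty by (simp add: tauhat_def divide_le_eq mult.commute)
qed

lemma peeled_vertex_dens_le:
  fixes \<xi> \<epsilon> :: real
  assumes "finite V" "densest_subset V Wo" "Wo \<subseteq> W" "w \<in> Wo"
    and "w \<in> Lset (mk M) \<xi> W c" "accurate \<epsilon> (deg W) W c" "\<epsilon> \<le> 1"
  shows "(1 - \<epsilon>) * dens Wo \<le> real (mk M) * (1 + \<xi>) * (tauhat (mk M) W c / card W)"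
proof -
  have "dens Wo \<le> deg Wo w"
    using densest_subset_min_deg assms(1,2,4) .
  also have "\<dots> \<le> deg W w"
    using deg_mono[OF assms(3)] .
  finally have "(1 - \<epsilon>) * dens Wo \<le> (1 - \<epsilon>) * deg W w"
    using assms(7) by (simp add: mult_left_mono)
  also have "\<dots> \<le> c w"
    using assms(3-6) by (force simp: accurate_def Lset_def algebra_simps abs_le_iff)
  also have "\<dots> \<le> real (mk M) * (1 + \<xi>) * (tauhat (mk M) W c / card W)"
    using assms(5) by (simp add: Lset_def)
  finally show ?thesis .
qed

lemma hybrid_max_score_ge:
  fixes \<xi> \<epsilon> s :: real and V :: "'v set" and h :: "('v \<Rightarrow> real) list"
  defines "Ws \<equiv> Wseq (mk M) \<xi> V h"
  assumes "finite V" "densest_subset V Wo" "0 \<le> \<xi>" "0 \<le> \<epsilon>" "\<epsilon> \<le> 1"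
    and accurate: "\<And>i. i < J \<Longrightarrow> accurate \<epsilon> (deg (Ws i)) (Ws i) (h ! i)"
    and score_le: "\<And>j. j < J \<Longrightarrow> Ws j \<noteq> {} \<Longrightarrow> tauhat (mk M) (Ws j) (h ! j) / card (Ws j) \<le> s"
    and greedy: "Ws J \<noteq> {} \<Longrightarrow>
      \<exists>us. greedy_run deg (mk M) us \<and> hd us = Ws J \<and> (\<forall>U\<in>set us. dens U \<le> s)"
  shows "(1 - \<epsilon>) * dens Wo / (mk M * (1 + \<xi>)) \<le> s"
proof (cases "Wo \<subseteq> Ws J")
  case True
  have Wo_ne: "Wo \<noteq> {}"
    using assms(3) by (simp add: densest_subset_def)
  then obtain us where us: "greedy_run deg (mk M) us" "hd us = Ws J" "\<forall>U\<in>set us. dens U \<le> s"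
    using greedy True by blast
  have "finite (Ws J)"
    using Wseq_subset assms(2) unfolding Ws_def by (rule finite_subset)
  then have "\<exists>U\<in>set us. dens Wo / mk M \<le> dens U"
    using us(2) True Wo_ne
    by (intro greedy_run_dens_ge[OF us(1)] densest_subset_min_deg[OF assms(2,3)]) auto
  then have "dens Wo / mk M \<le> s"
    using us(3) by fastforce
  moreover have "(1 - \<epsilon>) / (1 + \<xi>) * (dens Wo / mk M) \<le> dens Wo / mk M"
    using assms(4-6) dens_nonneg[of Wo] by (intro mult_left_le_one_le) auto
  moreover have "(1 - \<epsilon>) * dens Wo / (mk M * (1 + \<xi>)) = (1 - \<epsilon>) / (1 + \<xi>) * (dens Wo / mk M)"
    by simp
  ultimately show ?thesis
    by linarith
next
  case False
  have "\<exists>i<J. Wo \<subseteq> Ws i \<and> \<not> Wo \<subseteq> Ws (Suc i)"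
    by (rule exists_first_failure[of "\<lambda>i. Wo \<subseteq> Ws i"])
      (use assms(3) False in \<open>simp_all add: Ws_def densest_subset_def\<close>)
  then obtain i w where i: "i < J" "Wo \<subseteq> Ws i" and w: "w \<in> Wo" "w \<in> Lset (mk M) \<xi> (Ws i) (h ! i)"
    by (auto simp: Ws_def)
  then have "(1 - \<epsilon>) * dens Wo \<le> mk M * (1 + \<xi>) * (tauhat (mk M) (Ws i) (h ! i) / card (Ws i))"
    using peeled_vertex_dens_le[OF assms(2,3) i(2) w accurate[OF i(1)] assms(6)] by simp
  then have "(1 - \<epsilon>) * dens Wo / (mk M * (1 + \<xi>)) \<le> tauhat (mk M) (Ws i) (h ! i) / card (Ws i)"
    using assms(4) motif_nonempty by (simp add: divide_le_eq mult_ac)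
  also have "\<dots> \<le> s"
    using score_le i w by blast
  finally show ?thesis .
qed

lemma hybrid_output_dens_ge:
  fixes \<xi> \<epsilon> :: real
  assumes "finite V" "V \<noteq> {}" "0 \<le> \<xi>" "0 \<le> \<epsilon>" "\<epsilon> \<le> 1"
    and accurate: "\<And>i. i < J \<Longrightarrow>
      accurate \<epsilon> (deg (Wseq (mk M) \<xi> V h i)) (Wseq (mk M) \<xi> V h i) (h ! i)"
    and out: "hybrid_output M \<delta> E \<tau> \<xi> J V h W"
  shows "(1 - \<epsilon>) / (mk M * (1 + \<xi>) * (1 + \<epsilon>)) * OPT M \<delta> E \<tau> V \<le> dens W"
proof -
  let ?Ws = "Wseq (mk M) \<xi> V h"
  let ?score = "\<lambda>j. tauhat (mk M) (?Ws j) (h ! j) / card (?Ws j)"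
  obtain Wo where Wo: "densest_subset V Wo" "dens Wo = OPT M \<delta> E \<tau> V"
    using densest_subset_exists assms(1,2) .
  obtain s where score_le: "\<And>j. j < J \<Longrightarrow> ?Ws j \<noteq> {} \<Longrightarrow> ?score j \<le> s"
    and greedy: "?Ws J \<noteq> {} \<Longrightarrow> \<exists>us. greedy_run deg (mk M) us \<and> hd us = ?Ws J \<and>
        (\<forall>U\<in>set us. dens U \<le> s)"
    and chosen: "(\<exists>j<J. ?Ws j \<noteq> {} \<and> W = ?Ws j \<and> s = ?score j) \<or> (?Ws J \<noteq> {} \<and> s = dens W)"
    by (rule hybrid_outputE[OF out]) (rule that)
  define c where "c = (1 - \<epsilon>) * OPT M \<delta> E \<tau> V / (mk M * (1 + \<xi>))"
  have "c \<le> s"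
    unfolding c_def using hybrid_max_score_ge[OF assms(1) Wo(1) assms(3-5) accurate score_le greedy] Wo(2) by simp
  moreover have "s \<le> (1 + \<epsilon>) * dens W"
    using chosen
  proof
    assume "\<exists>j<J. ?Ws j \<noteq> {} \<and> W = ?Ws j \<and> s = ?score j"
    then obtain j where j: "j < J" "W = ?Ws j" "s = ?score j"
      by blast
    have "finite (?Ws j)"
      using Wseq_subset assms(1) by (rule finite_subset)
    then show ?thesis
      using j tauhat_le_weight[OF _ accurate[OF j(1)]]
      by (simp add: rho_def divide_right_mono mult.commute)
  next
    assume "?Ws J \<noteq> {} \<and> s = dens W"
    then show ?thesis
      using assms(4) dens_nonneg[of W] by (simp add: mult_le_cancel_right1)
  qed
  ultimately have "c / (1 + \<epsilon>) \<le> dens W"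
    using assms(4) by (simp add: divide_le_eq mult.commute)
  then show ?thesis
    by (simp add: c_def)
qed

end

lemma samp_Suc_snoc:
  "samp D (Suc n) h0 = bind_pmf (samp D n h0) (\<lambda>h. map_pmf (\<lambda>c. h @ [c]) (D (length h) h))"
proof (induction n arbitrary: h0)
  case 0
  then show ?case
    by (simp add: bind_return_pmf map_pmf_def)
next
  case (Suc n)
  let ?snoc = "\<lambda>h. map_pmf (\<lambda>c. h @ [c]) (D (length h) h)"
  have "samp D (Suc (Suc n)) h0 = bind_pmf (D (length h0) h0) (\<lambda>c. samp D (Suc n) (h0 @ [c]))"
    by (simp only: samp.simps)
  also have "\<dots> = bind_pmf (D (length h0) h0) (\<lambda>c. bind_pmf (samp D n (h0 @ [c])) ?snoc)"
    by (simp only: Suc.IH)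
  also have "\<dots> = bind_pmf (samp D (Suc n) h0) ?snoc"
    by (simp only: samp.simps bind_assoc_pmf)
  finally show ?case .
qed

lemma length_samp: "h \<in> set_pmf (samp D n h0) \<Longrightarrow> length h = length h0 + n"
  by (induction n arbitrary: h0) fastforce+

text \<open>\<open>Q i\<close> is the failure event of step \<open>i\<close>; it is evaluated on the history truncated
  after step \<open>i\<close>, so it cannot depend on later estimates.\<close>
lemma prob_samp_some_bad_step:
  assumes "0 \<le> p"
    and bad: "\<And>i h. i < n \<Longrightarrow> h \<in> set_pmf (samp D i []) \<Longrightarrow>
      measure_pmf.prob (D i h) {c. Q i (h @ [c])} \<le> p"
  shows "measure_pmf.prob (samp D n []) {h. \<exists>i<n. Q i (take (Suc i) h)} \<le> real n * p"
proof -
  define B where "B m = {h. \<exists>i<m. Q i (take (Suc i) h)}" for m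
  have "m \<le> n \<Longrightarrow> emeasure (samp D m []) (B m) \<le> ennreal (real m * p)" for m
  proof (induction m)
    case 0
    then show ?case by (simp add: B_def)
  next
    case (Suc m)
    have step: "emeasure (D (length h) h) ((\<lambda>c. h @ [c]) -` B (Suc m)) \<le> indicator (B m) h + ennreal p"
      if h: "h \<in> set_pmf (samp D m [])" for h
    proof (cases "h \<in> B m")
      case True
      have "emeasure (D (length h) h) ((\<lambda>c. h @ [c]) -` B (Suc m)) \<le> 1"
        by (rule measure_pmf.emeasure_le_1)
      also have "\<dots> \<le> indicator (B m) h + ennreal p"
        using True by simp
      finally show ?thesis .
    next
      case False
      have len: "length h = m"
        using length_samp[OF h] by simp
      then have "(\<lambda>c. h @ [c]) -` B (Suc m) \<subseteq> {c. Q m (h @ [c])}"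
        using False by (auto simp: B_def less_Suc_eq)
      then have "emeasure (D m h) ((\<lambda>c. h @ [c]) -` B (Suc m)) \<le> emeasure (D m h) {c. Q m (h @ [c])}"
        by (rule emeasure_mono) simp
      also have "\<dots> \<le> ennreal p"
        using bad[OF _ h] Suc.prems by (simp add: measure_pmf.emeasure_eq_measure ennreal_leI)
      finally show ?thesis
        using len False by simp
    qed
    have "emeasure (samp D (Suc m) []) (B (Suc m))
        = (\<integral>\<^sup>+h. emeasure (D (length h) h) ((\<lambda>c. h @ [c]) -` B (Suc m)) \<partial>samp D m [])"
      unfolding samp_Suc_snoc by simp
    also have "\<dots> \<le> (\<integral>\<^sup>+h. (indicator (B m) h + ennreal p) \<partial>samp D m [])"
      by (rule nn_integral_mono_AE) (simp add: AE_pmfI step)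
    also have "\<dots> = emeasure (samp D m []) (B m) + ennreal p"
      by (simp add: nn_integral_add measure_pmf.emeasure_space_1)
    also have "\<dots> \<le> ennreal (real m * p) + ennreal p"
      using Suc by (simp add: add_right_mono)
    also have "\<dots> = ennreal (real (Suc m) * p)"
      using assms(1) by (simp add: ennreal_plus[symmetric] algebra_simps del: ennreal_plus)
    finally show ?case .
  qed
  then show ?thesis
    using assms(1) by (simp add: B_def measure_pmf.emeasure_eq_measure)
qed

lemma prob_all_estimates_accurate:
  fixes C :: "'v set \<Rightarrow> 'v \<Rightarrow> real" and \<epsilon> \<eta> :: real
  assumes "0 < J" "0 \<le> \<eta>"
    and acc: "\<And>i h. i < J \<Longrightarrow> h \<in> set_pmf (samp D i []) \<Longrightarrow>
      1 - \<eta> / J \<le> measure_pmf.prob (D i h) {c. accurate \<epsilon> (C (Wseq k \<xi> V h i)) (Wseq k \<xi> V h i) c}"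
  shows "1 - \<eta> \<le> measure_pmf.prob (samp D J [])
    {h. \<forall>i<J. accurate \<epsilon> (C (Wseq k \<xi> V h i)) (Wseq k \<xi> V h i) (h ! i)}"
proof -
  define good where "good i h \<longleftrightarrow> accurate \<epsilon> (C (Wseq k \<xi> V h i)) (Wseq k \<xi> V h i) (h ! i)" for i h
  let ?bad = "{h. \<exists>i<J. \<not> good i (take (Suc i) h)}"
  have "measure_pmf.prob (samp D J []) ?bad \<le> real J * (\<eta> / J)"
  proof (rule prob_samp_some_bad_step)
    fix i h assume i: "i < J" and h: "h \<in> set_pmf (samp D i [])"
    let ?acc = "{c. accurate \<epsilon> (C (Wseq k \<xi> V h i)) (Wseq k \<xi> V h i) c}"
    have len: "length h = i"
      using length_samp[OF h] by simp
    have "Wseq k \<xi> V (h @ [c]) i = Wseq k \<xi> V h i" for c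
      using Wseq_take[of i i k \<xi> V "h @ [c]"] len by simp
    then have "{c. \<not> good i (h @ [c])} = space (measure_pmf (D i h)) - ?acc"
      using len by (auto simp: good_def)
    then show "measure_pmf.prob (D i h) {c. \<not> good i (h @ [c])} \<le> \<eta> / J"
      using acc[OF i h] measure_pmf.prob_compl[of ?acc "D i h"] by simp
  qed (use assms(2) in simp)
  moreover have "measure_pmf.prob (samp D J []) (space (samp D J []) - ?bad) \<le>
      measure_pmf.prob (samp D J []) {h. \<forall>i<J. good i h}"
  proof (rule measure_pmf.finite_measure_mono_AE[OF AE_pmfI], intro impI CollectI allI)
    fix h i assume "h \<in> space (samp D J []) - ?bad" "i < J"
    then show "good i h"
      using Wseq_take[of i "Suc i" k \<xi> V h] by (auto simp: good_def)
  qed simp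
  moreover have "measure_pmf.prob (samp D J []) (space (samp D J []) - ?bad) =
      1 - measure_pmf.prob (samp D J []) ?bad"
    by (rule measure_pmf.prob_compl) simp
  moreover have "real J * (\<eta> / J) = \<eta>"
    using assms(1) by simp
  ultimately show ?thesis
    unfolding good_def by linarith
qed

lemma approximation_factor_le:
  fixes \<epsilon> \<xi> :: real
  assumes "0 < k" "0 \<le> \<xi>" "0 \<le> \<epsilon>" "\<epsilon> \<le> 1"
  shows "(if J \<ge> 2 then (1 - \<epsilon>)^2 / (real k * (1 + \<xi>) * (1 + \<epsilon>)^2)
          else (1 - \<epsilon>)^2 / (real k * (1 + \<xi>) * (1 + \<epsilon>)))
         \<le> (1 - \<epsilon>) / (real k * (1 + \<xi>) * (1 + \<epsilon>))"
proof -
  have "(1 - \<epsilon>)^2 / (real k * (1 + \<xi>) * (1 + \<epsilon>)^2) \<le> (1 - \<epsilon>)^2 / (real k * (1 + \<xi>) * (1 + \<epsilon>))"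
    using assms by (intro divide_left_mono mult_left_mono) (auto simp: power2_eq_square)
  moreover have "(1 - \<epsilon>)^2 / (real k * (1 + \<xi>) * (1 + \<epsilon>)) \<le> (1 - \<epsilon>) / (real k * (1 + \<xi>) * (1 + \<epsilon>))"
    using assms by (intro divide_right_mono) (auto simp: power2_eq_square mult_left_le_one_le)
  ultimately show ?thesis
    by auto
qed

theorem theorem4p2:
  fixes V :: "'v set" and E :: "'v tedge set" and M :: "('m \<times> 'm) list"
    and \<delta> \<xi> \<epsilon> \<eta> :: real and \<tau> :: "'v tedge list \<Rightarrow> real" and J :: nat
    and D :: "nat \<Rightarrow> ('v \<Rightarrow> real) list \<Rightarrow> ('v \<Rightarrow> real) pmf"
  assumes net: "temporal_network V E" and Vne: "V \<noteq> {}"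
    and mot: "temporal_motif M" and dpos: "\<delta> > 0"
    and taupos: "\<forall>S. is_instance M \<delta> E S \<longrightarrow> \<tau> S > 0"
    and xi: "\<xi> > 0" and eps: "0 < \<epsilon>" "\<epsilon> < 1" and eta: "0 < \<eta>" "\<eta> < 1"
    and J: "J \<ge> 1"
    and nonneg: "\<And>i h c w. i < J \<Longrightarrow> h \<in> set_pmf (samp D i []) \<Longrightarrow> c \<in> set_pmf (D i h) \<Longrightarrow>
                   w \<in> Wseq (mk M) \<xi> V h i \<Longrightarrow> c w \<ge> 0"
    and acc: "\<And>i h. i < J \<Longrightarrow> h \<in> set_pmf (samp D i []) \<Longrightarrow>
                measure_pmf.prob (D i h)
                  {c. \<forall>w \<in> Wseq (mk M) \<xi> V h i.
                        \<bar>c w - mdeg M \<delta> E \<tau> (Wseq (mk M) \<xi> V h i) w\<bar>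
                          \<le> \<epsilon> * mdeg M \<delta> E \<tau> (Wseq (mk M) \<xi> V h i) w}
                \<ge> 1 - \<eta> / real J"
  shows "measure_pmf.prob (samp D J [])
           {h. \<forall>W. hybrid_output M \<delta> E \<tau> \<xi> J V h W \<longrightarrow>
                 rho M \<delta> E \<tau> W \<ge>
                   (if J \<ge> 2 then (1 - \<epsilon>)^2 / (real (mk M) * (1 + \<xi>) * (1 + \<epsilon>)^2)
                    else (1 - \<epsilon>)^2 / (real (mk M) * (1 + \<xi>) * (1 + \<epsilon>))) * OPT M \<delta> E \<tau> V}
         \<ge> 1 - \<eta>"
proof -
  interpret motif_weighting M \<delta> E \<tau>
    using net mot taupos by unfold_locales (auto simp: temporal_network_def temporal_motif_def)
  let ?factor = "if J \<ge> 2 then (1 - \<epsilon>)^2 / (real (mk M) * (1 + \<xi>) * (1 + \<epsilon>)^2)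
    else (1 - \<epsilon>)^2 / (real (mk M) * (1 + \<xi>) * (1 + \<epsilon>))"
  let ?accurate = "{h. \<forall>i<J. accurate \<epsilon> (deg (Wseq (mk M) \<xi> V h i)) (Wseq (mk M) \<xi> V h i) (h ! i)}"
  have fin: "finite V"
    using net by (simp add: temporal_network_def)
  have "1 - \<eta> \<le> measure_pmf.prob (samp D J []) ?accurate"
    using J eta acc by (intro prob_all_estimates_accurate) (auto simp: accurate_def)
  also have "\<dots> \<le> measure_pmf.prob (samp D J [])
      {h. \<forall>W. hybrid_output M \<delta> E \<tau> \<xi> J V h W \<longrightarrow> ?factor * OPT M \<delta> E \<tau> V \<le> dens W}"
  proof (rule measure_pmf.finite_measure_mono, intro subsetI CollectI allI impI)
    fix h W assume "h \<in> ?accurate" and out: "hybrid_output M \<delta> E \<tau> \<xi> J V h W"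
    then have "(1 - \<epsilon>) / (mk M * (1 + \<xi>) * (1 + \<epsilon>)) * OPT M \<delta> E \<tau> V \<le> dens W"
      using fin Vne xi eps by (intro hybrid_output_dens_ge) auto
    moreover have "?factor * OPT M \<delta> E \<tau> V \<le> (1 - \<epsilon>) / (mk M * (1 + \<xi>) * (1 + \<epsilon>)) * OPT M \<delta> E \<tau> V"
      using motif_nonempty xi eps by (intro mult_right_mono approximation_factor_le OPT_nonneg fin Vne) auto
    ultimately show "?factor * OPT M \<delta> E \<tau> V \<le> dens W"
      by linarith
  qed simp
  finally show ?thesis .
qed

end
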